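(* For all integers $2\le k\le n$, $$\frac12+\frac{1}{4n}\le q_t(G_k,G_n)\le \frac12+\frac{1}{2n}.$$ In particular, for every $k\ge 2$, $\lim_{n\to\infty} q_t(G_k,G_n)=\frac12$.
   Context: For $m\ge 1$, $G_m$ is the graph with vertex set $\{a_1,\ldots,a_m\}\cup\{b_1,\ldots,b_m\}\cup\{c_1,\ldots,c_m\}$ in which $\{a_1,\ldots,a_m\}$ forms a clique, each $b_i$ is adjacent to $a_i$ and to $c_i$, and there are no other edges. $\gamma_t$ denotes the total domination number (minimum size of a set $S$ of vertices such that every vertex of the graph has a neighbor in $S$). $G\Box H$ is the Cartesian product: vertex set $V(G)\times V(H)$, with $(u_1,v_1)\sim(u_2,v_2)$ iff either $u_1=u_2$ and $v_1v_2\in E(H)$, or $v_1=v_2$ and $u_1u_2\in E(G)$. For graphs $G,H$ without isolated vertices, the total domination quotient is $q_t(G,H)=\dfrac{\gamma_t(G\Box H)}{\gamma_t(G)\gamma_t(H)}$. *)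

theory Defs
  imports Complex_Main
begin

text \<open>A (simple) graph is given by a vertex set and a symmetric, irreflexive
adjacency relation.\<close>
type_synonym 'a graph = "'a set \<times> ('a \<Rightarrow> 'a \<Rightarrow> bool)"

definition verts :: "'a graph \<Rightarrow> 'a set" where "verts G = fst G"
definition adj :: "'a graph \<Rightarrow> 'a \<Rightarrow> 'a \<Rightarrow> bool" where "adj G = snd G"

definition total_dominating :: "'a graph \<Rightarrow> 'a set \<Rightarrow> bool" where
  "total_dominating G S \<longleftrightarrow> S \<subseteq> verts G \<and> (\<forall>v\<in>verts G. \<exists>u\<in>S. adj G v u)"

definition gamma_t :: "'a graph \<Rightarrow> nat" where
  "gamma_t G = (LEAST k. \<exists>S. total_dominating G S \<and> finite S \<and> card S = k)"

definition cart_prod :: "'a graph \<Rightarrow> 'b graph \<Rightarrow> ('a \<times> 'b) graph" where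
  "cart_prod G H = (verts G \<times> verts H,
     \<lambda>(u1, v1) (u2, v2). (u1 = u2 \<and> adj H v1 v2) \<or> (v1 = v2 \<and> adj G u1 u2))"

definition q_t :: "'a graph \<Rightarrow> 'b graph \<Rightarrow> real" where
  "q_t G H = real (gamma_t (cart_prod G H)) / (real (gamma_t G) * real (gamma_t H))"

text \<open>The graph G_m: vertex (0,i) is a_i, (1,i) is b_i, (2,i) is c_i, for 1 \<le> i \<le> m.
The a_i form a clique, b_i is adjacent to a_i and c_i, no other edges.\<close>
definition G :: "nat \<Rightarrow> (nat \<times> nat) graph" where
  "G m = ({0, 1, 2} \<times> {1..m},
     \<lambda>(x, i) (y, j). (x = 0 \<and> y = 0 \<and> i \<noteq> j)
                   \<or> (i = j \<and> ((x = 0 \<and> y = 1) \<or> (x = 1 \<and> y = 0)))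
                   \<or> (i = j \<and> ((x = 1 \<and> y = 2) \<or> (x = 2 \<and> y = 1))))"

end

(* Each c_i forces b_i into a total dominating set of G_m, and each b_i needs a further
   neighbour a_i or c_i, so gamma_t(G_m) = 2m.

   In G_k \<box> G_n look at the kn blocks {a_i,b_i,c_i} \<times> {a_j,b_j,c_j}.  The neighbourhoods of
   (c_i,c_j), (b_i,c_j) and (c_i,b_j) lie inside the block, which forces at least two vertices
   of a total dominating set S into every block, and a third one if S meets the block in a
   vertex with an a-coordinate or in both (b_i,c_j) and (c_i,b_j).  These heavy blocks meet
   every row or every column: in a row i without a heavy block, the vertex (c_i,a_j) can only
   be dominated by (c_i,b_j), so (b_i,c_j) is absent and (a_i,c_j) must be dominated by some
   (a_i',c_j), whose block is heavy.  Hence gamma_t(G_k \<box> G_n) \<ge> 2kn + k for k \<le> n, while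
   an explicit total dominating set has 2kn + 2k elements. *)

theory Submission
  imports Defs
begin

lemma verts_G [simp]: "verts (G m) = {0,1,2} \<times> {1..m}"
  by (simp add: verts_def G_def)

lemma adj_G [simp]:
  "adj (G m) (x, i) (y, j) \<longleftrightarrow>
     (x = 0 \<and> y = 0 \<and> i \<noteq> j)
   \<or> (i = j \<and> ((x = 0 \<and> y = 1) \<or> (x = 1 \<and> y = 0)))
   \<or> (i = j \<and> ((x = 1 \<and> y = 2) \<or> (x = 2 \<and> y = 1)))"
  by (simp add: adj_def G_def)

lemma verts_cart_prod [simp]: "verts (cart_prod A B) = verts A \<times> verts B"
  by (simp add: verts_def cart_prod_def)

lemma adj_cart_prod [simp]:
  "adj (cart_prod A B) (u1, v1) (u2, v2) \<longleftrightarrow>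
     (u1 = u2 \<and> adj B v1 v2) \<or> (v1 = v2 \<and> adj A u1 u2)"
  by (simp add: adj_def cart_prod_def)

lemma total_dominating_subset: "total_dominating H S \<Longrightarrow> S \<subseteq> verts H"
  by (simp add: total_dominating_def)

lemma gamma_t_le_card: "total_dominating H S \<Longrightarrow> finite S \<Longrightarrow> gamma_t H \<le> card S"
  unfolding gamma_t_def by (rule Least_le) blast

lemma gamma_t_attained:
  assumes "total_dominating H S0" "finite S0"
  obtains S where "total_dominating H S" "finite S" "card S = gamma_t H"
proof -
  have "\<exists>S. total_dominating H S \<and> finite S \<and> card S = gamma_t H"
    unfolding gamma_t_def by (rule LeastI_ex) (use assms in blast)
  then show ?thesis using that by blast
qed

lemma two_le_card:
  assumes "finite A" "a \<in> A" "b \<in> A" "a \<noteq> b"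
  shows "2 \<le> card A"
proof -
  have "card {a, b} = 2" using assms by simp
  then show ?thesis using card_mono[OF assms(1), of "{a, b}"] assms by simp
qed

lemma three_le_card:
  assumes "finite A" "a \<in> A" "b \<in> A" "c \<in> A" "a \<noteq> b" "a \<noteq> c" "b \<noteq> c"
  shows "3 \<le> card A"
proof -
  have "card {a, b, c} = 3" using assms by simp
  then show ?thesis using card_mono[OF assms(1), of "{a, b, c}"] assms by simp
qed

lemma min_card_le_card_if_rows_or_columns_covered:
  assumes "finite H" and "(\<forall>i\<in>I. \<exists>j. (i, j) \<in> H) \<or> (\<forall>j\<in>J. \<exists>i. (i, j) \<in> H)"
  shows "min (card I) (card J) \<le> card H"
  using assms(2)
proof
  assume "\<forall>i\<in>I. \<exists>j. (i, j) \<in> H"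
  then have "I \<subseteq> fst ` H" by force
  then have "card I \<le> card H"
    using card_mono[of "fst ` H" I] card_image_le[of H fst] assms(1) by simp
  then show ?thesis by simp
next
  assume "\<forall>j\<in>J. \<exists>i. (i, j) \<in> H"
  then have "J \<subseteq> snd ` H" by force
  then have "card J \<le> card H"
    using card_mono[of "snd ` H" J] card_image_le[of H snd] assms(1) by simp
  then show ?thesis by simp
qed

lemma total_dominating_G: "total_dominating (G m) ({0,1} \<times> {1..m})"
  unfolding total_dominating_def
proof (intro conjI ballI)
  fix v assume "v \<in> verts (G m)"
  then obtain x i where v: "v = (x, i)" "x \<in> {0,1,2}" "i \<in> {1..m}" by auto
  show "\<exists>u\<in>{0,1} \<times> {1..m}. adj (G m) v u"
  proof (cases "x = 1")
    case True
    then show ?thesis using v by (intro bexI[of _ "(0, i)"]) auto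
  next
    case False
    then show ?thesis using v by (intro bexI[of _ "(1, i)"]) auto
  qed
qed auto

lemma card_total_dominating_G_ge:
  assumes td: "total_dominating (G m) S" and fin: "finite S"
  shows "2 * m \<le> card S"
proof -
  let ?B = "{1::nat} \<times> {1..m}" and ?T = "S \<inter> ({0,2} \<times> {1..m})"
  have "?B \<subseteq> S"
  proof
    fix v assume "v \<in> ?B"
    then obtain i where v: "v = (1, i)" "i \<in> {1..m}" by auto
    then have "(2, i) \<in> verts (G m)" by simp
    then obtain u where "u \<in> S" "adj (G m) (2, i) u"
      using td unfolding total_dominating_def by blast
    then show "v \<in> S" using v by (cases u) auto
  qed
  have "{1..m} \<subseteq> snd ` ?T"
  proof
    fix i assume i: "i \<in> {1..m}"
    then have "(1, i) \<in> verts (G m)" by simp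
    then obtain u where "u \<in> S" "adj (G m) (1, i) u"
      using td unfolding total_dominating_def by blast
    then obtain y where "(y, i) \<in> S" "y \<in> {0,2}" by (cases u) auto
    then show "i \<in> snd ` ?T" using i by (intro image_eqI[of _ snd "(y, i)"]) auto
  qed
  then have "m \<le> card ?T"
    using card_mono[of "snd ` ?T" "{1..m}"] card_image_le[of ?T snd] fin by simp
  moreover have "card (?B \<union> ?T) = m + card ?T"
    using fin by (subst card_Un_disjoint) (auto simp: card_cartesian_product)
  moreover have "card (?B \<union> ?T) \<le> card S"
    using fin \<open>?B \<subseteq> S\<close> by (intro card_mono) auto
  ultimately show ?thesis by linarith
qed

lemma gamma_t_G: "gamma_t (G m) = 2 * m"
proof (rule antisym)
  show "gamma_t (G m) \<le> 2 * m"
    using gamma_t_le_card[OF total_dominating_G, of m]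
    by (simp add: card_cartesian_product mult_2)
  obtain S where "total_dominating (G m) S" "finite S" "card S = gamma_t (G m)"
    by (rule gamma_t_attained[OF total_dominating_G]) simp
  then show "2 * m \<le> gamma_t (G m)" using card_total_dominating_G_ge by metis
qed

lemma dominator_in_G_product:
  assumes "total_dominating (cart_prod (G k) (G n)) S"
    and "x \<in> {0,1,2}" "i \<in> {1..k}" "y \<in> {0,1,2}" "j \<in> {1..n}"
  obtains x' i' y' j' where "((x',i'),(y',j')) \<in> S"
    and "adj (cart_prod (G k) (G n)) ((x,i),(y,j)) ((x',i'),(y',j'))"
proof -
  have "((x,i),(y,j)) \<in> verts (cart_prod (G k) (G n))" using assms by simp
  then obtain u where "u \<in> S" "adj (cart_prod (G k) (G n)) ((x,i),(y,j)) u"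
    using assms(1) unfolding total_dominating_def by blast
  then show ?thesis using that by (metis prod.exhaust)
qed

definition block :: "nat \<Rightarrow> nat \<Rightarrow> ((nat \<times> nat) \<times> (nat \<times> nat)) set" where
  "block i j = ({0,1,2} \<times> {i}) \<times> ({0,1,2} \<times> {j})"

(* the dominators of (c_i,c_j), (b_i,c_j) and (c_i,b_j) *)
lemma block_dominators:
  assumes "total_dominating (cart_prod (G k) (G n)) S" "i \<in> {1..k}" "j \<in> {1..n}"
  shows "((1,i),(2,j)) \<in> S \<or> ((2,i),(1,j)) \<in> S"
    and "((0,i),(2,j)) \<in> S \<or> ((2,i),(2,j)) \<in> S \<or> ((1,i),(1,j)) \<in> S"
    and "((1,i),(1,j)) \<in> S \<or> ((2,i),(0,j)) \<in> S \<or> ((2,i),(2,j)) \<in> S"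
proof -
  show "((1,i),(2,j)) \<in> S \<or> ((2,i),(1,j)) \<in> S"
    by (rule dominator_in_G_product[OF assms(1) _ assms(2) _ assms(3), of 2 2]) auto
  show "((0,i),(2,j)) \<in> S \<or> ((2,i),(2,j)) \<in> S \<or> ((1,i),(1,j)) \<in> S"
    by (rule dominator_in_G_product[OF assms(1) _ assms(2) _ assms(3), of 1 2]) auto
  show "((1,i),(1,j)) \<in> S \<or> ((2,i),(0,j)) \<in> S \<or> ((2,i),(2,j)) \<in> S"
    by (rule dominator_in_G_product[OF assms(1) _ assms(2) _ assms(3), of 2 1]) auto
qed

lemma two_le_card_block:
  assumes "total_dominating (cart_prod (G k) (G n)) S" "finite S" "i \<in> {1..k}" "j \<in> {1..n}"
  shows "2 \<le> card (S \<inter> block i j)"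
proof -
  obtain u where u: "u \<in> S" "u \<in> {((1,i),(2,j)), ((2,i),(1,j))}"
    using block_dominators(1)[OF assms(1,3,4)] by blast
  obtain v where v: "v \<in> S" "v \<in> {((0,i),(2,j)), ((2,i),(2,j)), ((1,i),(1,j))}"
    using block_dominators(2)[OF assms(1,3,4)] by blast
  show ?thesis by (rule two_le_card[of _ u v]) (use assms(2) u v in \<open>auto simp: block_def\<close>)
qed

lemma three_le_card_block_if_clique_coordinate:
  assumes "total_dominating (cart_prod (G k) (G n)) S" "finite S"
    and w: "((x,i),(y,j)) \<in> S" "x = 0 \<or> y = 0"
  shows "3 \<le> card (S \<inter> block i j)"
proof -
  have ranges: "x \<in> {0,1,2}" "i \<in> {1..k}" "y \<in> {0,1,2}" "j \<in> {1..n}"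
    using total_dominating_subset[OF assms(1)] w(1) by auto
  have fin: "finite (S \<inter> block i j)" using assms(2) by simp
  obtain u where u: "u \<in> S" "u \<in> {((1,i),(2,j)), ((2,i),(1,j))}"
    using block_dominators(1)[OF assms(1) ranges(2,4)] by blast
  show ?thesis
  proof (cases "((1,i),(1,j)) \<in> S \<or> ((2,i),(2,j)) \<in> S")
    case True
    then obtain z where z: "z \<in> S" "z \<in> {((1,i),(1,j)), ((2,i),(2,j))}" by blast
    have "((x,i),(y,j)) \<notin> {((1,i),(2,j)), ((2,i),(1,j)), ((1,i),(1,j)), ((2,i),(2,j))}"
      using w(2) by auto
    then show ?thesis using u z w(1) ranges(1,3)
      by (intro three_le_card[OF fin, of u z "((x,i),(y,j))"]) (auto simp: block_def)
  next
    case False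
    then have "((0,i),(2,j)) \<in> S" "((2,i),(0,j)) \<in> S"
      using block_dominators(2,3)[OF assms(1) ranges(2,4)] by auto
    then show ?thesis by (intro three_le_card[OF fin, of u "((0,i),(2,j))" "((2,i),(0,j))"])
      (use u in \<open>auto simp: block_def\<close>)
  qed
qed

lemma three_le_card_block_if_bc_cb:
  assumes "total_dominating (cart_prod (G k) (G n)) S" "finite S" "i \<in> {1..k}" "j \<in> {1..n}"
    and "((1,i),(2,j)) \<in> S" "((2,i),(1,j)) \<in> S"
  shows "3 \<le> card (S \<inter> block i j)"
proof -
  obtain v where v: "v \<in> S" "v \<in> {((0,i),(2,j)), ((2,i),(2,j)), ((1,i),(1,j))}"
    using block_dominators(2)[OF assms(1,3,4)] by blast
  show ?thesis by (rule three_le_card[of _ "((1,i),(2,j))" "((2,i),(1,j))" v])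
    (use assms v in \<open>auto simp: block_def\<close>)
qed

definition heavy_blocks ::
    "nat \<Rightarrow> nat \<Rightarrow> ((nat \<times> nat) \<times> (nat \<times> nat)) set \<Rightarrow> (nat \<times> nat) set" where
  "heavy_blocks k n S = {(i, j) \<in> {1..k} \<times> {1..n}. 3 \<le> card (S \<inter> block i j)}"

lemma heavy_blocks_subset: "heavy_blocks k n S \<subseteq> {1..k} \<times> {1..n}"
  by (auto simp: heavy_blocks_def)

lemma heavy_block_if_clique_coordinate:
  assumes "total_dominating (cart_prod (G k) (G n)) S" "finite S"
    and "((x,i),(y,j)) \<in> S" "x = 0 \<or> y = 0"
  shows "(i, j) \<in> heavy_blocks k n S"
  using three_le_card_block_if_clique_coordinate[OF assms]
    total_dominating_subset[OF assms(1)] assms(3)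
  by (auto simp: heavy_blocks_def)

lemma heavy_block_in_column_if_light_row:
  assumes td: "total_dominating (cart_prod (G k) (G n)) S" and fin: "finite S"
    and i0: "i0 \<in> {1..k}" and light: "\<forall>j. (i0, j) \<notin> heavy_blocks k n S"
    and j: "j \<in> {1..n}"
  shows "\<exists>i. (i, j) \<in> heavy_blocks k n S"
proof -
  have no_clique_coordinate: "((x,i0),(y,j')) \<notin> S" if "x = 0 \<or> y = 0" for x y j'
    using heavy_block_if_clique_coordinate[OF td fin _ that] light by blast
  obtain x' i' y' j' where "((x',i'),(y',j')) \<in> S"
    and "adj (cart_prod (G k) (G n)) ((2,i0),(0,j)) ((x',i'),(y',j'))"
    by (rule dominator_in_G_product[OF td _ i0 _ j, of 2 0]) auto
  then have cb: "((2,i0),(1,j)) \<in> S" using no_clique_coordinate by auto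
  have "((1,i0),(2,j)) \<notin> S"
    using three_le_card_block_if_bc_cb[OF td fin i0 j _ cb] light j i0
    by (auto simp: heavy_blocks_def)
  moreover obtain x'' i'' y'' j'' where "((x'',i''),(y'',j'')) \<in> S"
    and "adj (cart_prod (G k) (G n)) ((0,i0),(2,j)) ((x'',i''),(y'',j''))"
    by (rule dominator_in_G_product[OF td _ i0 _ j, of 0 2]) auto
  ultimately show ?thesis
    using no_clique_coordinate by (fastforce intro: heavy_block_if_clique_coordinate[OF td fin])
qed

lemma card_heavy_blocks:
  assumes td: "total_dominating (cart_prod (G k) (G n)) S" and fin: "finite S" and "k \<le> n"
  shows "k \<le> card (heavy_blocks k n S)"
proof -
  have "(\<forall>i\<in>{1..k}. \<exists>j. (i, j) \<in> heavy_blocks k n S)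
      \<or> (\<forall>j\<in>{1..n}. \<exists>i. (i, j) \<in> heavy_blocks k n S)"
    using heavy_block_in_column_if_light_row[OF td fin] by blast
  then have "min (card {1..k}) (card {1..n}) \<le> card (heavy_blocks k n S)"
    by (rule min_card_le_card_if_rows_or_columns_covered[rotated])
      (rule finite_subset[OF heavy_blocks_subset], simp)
  then show ?thesis using \<open>k \<le> n\<close> by simp
qed

lemma sum_card_blocks_le:
  assumes "finite S" "finite I" "finite J"
  shows "(\<Sum>(i, j)\<in>I \<times> J. card (S \<inter> block i j)) \<le> card S"
proof -
  have "(\<Sum>(i, j)\<in>I \<times> J. card (S \<inter> block i j))
      = card (\<Union>(i, j)\<in>I \<times> J. S \<inter> block i j)"
    using assms by (subst card_UN_disjoint) (auto simp: block_def prod.case_distrib)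
  also have "\<dots> \<le> card S" using assms(1) by (intro card_mono) auto
  finally show ?thesis .
qed

lemma card_total_dominating_G_product_ge:
  assumes td: "total_dominating (cart_prod (G k) (G n)) S" and fin: "finite S" and "k \<le> n"
  shows "2 * k * n + k \<le> card S"
proof -
  let ?H = "heavy_blocks k n S"
  have "{1..k} \<times> {1..n} \<inter> {p. p \<in> ?H} = ?H" using heavy_blocks_subset by blast
  then have "2 * k * n + card ?H
      = (\<Sum>p\<in>{1..k} \<times> {1..n}. 2) + (\<Sum>p\<in>{1..k} \<times> {1..n}. of_bool (p \<in> ?H))"
    by (simp add: card_cartesian_product)
  also have "\<dots> = (\<Sum>p\<in>{1..k} \<times> {1..n}. 2 + of_bool (p \<in> ?H))"
    by (rule sum.distrib[symmetric])
  also have "\<dots> \<le> (\<Sum>(i, j)\<in>{1..k} \<times> {1..n}. card (S \<inter> block i j))"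
  proof (rule sum_mono)
    fix p assume "p \<in> {1..k} \<times> {1..n}"
    then obtain i j where "p = (i, j)" "i \<in> {1..k}" "j \<in> {1..n}" by blast
    then show "2 + of_bool (p \<in> ?H) \<le> (case p of (i, j) \<Rightarrow> card (S \<inter> block i j))"
      using two_le_card_block[OF td fin, of i j] by (auto simp: heavy_blocks_def)
  qed
  also have "\<dots> \<le> card S" using fin by (intro sum_card_blocks_le) auto
  finally show ?thesis using card_heavy_blocks[OF assms] by linarith
qed

(* For j < n the pair (b_i,b_j), (b_i,c_j) dominates its block except (a_i,a_j) and (c_i,a_j);
   these are dominated through the cliques by (a_i,a_1) (or (a_i',a_1) if j = 1) and by
   (c_i,a_n).  The last column is handled by (c_i,a_n), (c_i,b_n), (a_i,c_n). *)
definition product_dominating_set :: "nat \<Rightarrow> nat \<Rightarrow> ((nat \<times> nat) \<times> (nat \<times> nat)) set" where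
  "product_dominating_set k n =
     ({1} \<times> {1..k}) \<times> ({1,2} \<times> {1..<n}) \<union> ({2} \<times> {1..k}) \<times> ({0,1} \<times> {n})
   \<union> ({0} \<times> {1..k}) \<times> {(2,n), (0,1)}"

lemma total_dominating_product_dominating_set:
  assumes "2 \<le> k" "2 \<le> n"
  shows "total_dominating (cart_prod (G k) (G n)) (product_dominating_set k n)"
  unfolding total_dominating_def
proof (intro conjI ballI)
  show "product_dominating_set k n \<subseteq> verts (cart_prod (G k) (G n))"
    using assms by (auto simp: product_dominating_set_def)
next
  fix v assume "v \<in> verts (cart_prod (G k) (G n))"
  then obtain x i y j where v: "v = ((x,i),(y,j))" and ij: "i \<in> {1..k}" "j \<in> {1..n}"
    and xy: "x = 0 \<or> x = 1 \<or> x = 2" "y = 0 \<or> y = 1 \<or> y = 2"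
    by auto
  define i' where "i' = (if i = 1 then 2 else 1 :: nat)"
  have i': "i' \<in> {1..k}" "i' \<noteq> i" using assms ij unfolding i'_def by auto
  have "\<exists>u\<in>{((1,i),(1,j)), ((1,i),(2,j)), ((2,i),(0,n)), ((2,i),(1,n)), ((0,i),(2,n)),
              ((0,i'),(2,n)), ((0,i),(0,1)), ((0,i'),(0,1))}.
          u \<in> product_dominating_set k n \<and> adj (cart_prod (G k) (G n)) v u"
    using xy ij unfolding v
    by (cases "j < n"; elim disjE) (use assms i' in \<open>simp_all add: product_dominating_set_def\<close>)
  then show "\<exists>u\<in>product_dominating_set k n. adj (cart_prod (G k) (G n)) v u" by blast
qed

lemma card_product_dominating_set:
  assumes "1 \<le> n"
  shows "card (product_dominating_set k n) \<le> 2 * k * n + 2 * k"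
proof -
  have "card (product_dominating_set k n)
      \<le> card (({1::nat} \<times> {1..k}) \<times> ({1::nat,2} \<times> {1..<n}))
        + card (({2::nat} \<times> {1..k}) \<times> ({0::nat,1} \<times> {n}))
        + card (({0::nat} \<times> {1..k}) \<times> {(2::nat,n), (0,1)})"
    unfolding product_dominating_set_def
    by (intro card_Un_le[THEN order_trans] add_right_mono card_Un_le)
  also have "\<dots> = 2 * k * (n - 1) + 2 * k + 2 * k" by (simp add: card_cartesian_product)
  also have "\<dots> = 2 * k * n + 2 * k" using assms by (cases n) (simp_all add: algebra_simps)
  finally show ?thesis .
qed

lemma gamma_t_G_product_bounds:
  assumes "2 \<le> k" "k \<le> n"
  shows "2 * k * n + k \<le> gamma_t (cart_prod (G k) (G n))"
    and "gamma_t (cart_prod (G k) (G n)) \<le> 2 * k * n + 2 * k"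
proof -
  have td: "total_dominating (cart_prod (G k) (G n)) (product_dominating_set k n)"
    using assms by (intro total_dominating_product_dominating_set) auto
  have fin: "finite (product_dominating_set k n)" by (simp add: product_dominating_set_def)
  obtain S where "total_dominating (cart_prod (G k) (G n)) S" "finite S"
    "card S = gamma_t (cart_prod (G k) (G n))"
    by (rule gamma_t_attained[OF td fin])
  then show "2 * k * n + k \<le> gamma_t (cart_prod (G k) (G n))"
    using card_total_dominating_G_product_ge assms(2) by metis
  show "gamma_t (cart_prod (G k) (G n)) \<le> 2 * k * n + 2 * k"
    using gamma_t_le_card[OF td fin] card_product_dominating_set[of n k] assms by linarith
qed

lemma q_t_G_bounds:
  assumes "2 \<le> k" "k \<le> n"
  shows "1/2 + 1/(4 * real n) \<le> q_t (G k) (G n)" and "q_t (G k) (G n) \<le> 1/2 + 1/(2 * real n)"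
proof -
  let ?g = "real (gamma_t (cart_prod (G k) (G n)))" and ?d = "4 * real k * real n"
  have d: "?d > 0" using assms by simp
  have q: "q_t (G k) (G n) = ?g / ?d" by (simp add: q_t_def gamma_t_G)
  have "1/2 + 1/(4 * real n) = real (2 * k * n + k) / ?d"
    "1/2 + 1/(2 * real n) = real (2 * k * n + 2 * k) / ?d"
    using assms by (simp_all add: field_simps)
  moreover have "real (2 * k * n + k) \<le> ?g" "?g \<le> real (2 * k * n + 2 * k)"
    using of_nat_mono gamma_t_G_product_bounds[OF assms] by blast+
  ultimately show "1/2 + 1/(4 * real n) \<le> q_t (G k) (G n)"
    and "q_t (G k) (G n) \<le> 1/2 + 1/(2 * real n)"
    unfolding q using d by (simp_all add: divide_right_mono)
qed

lemma tendsto_plus_inverse_multiple_of_n: "(\<lambda>n. a + 1 / (c * real n)) \<longlonglongrightarrow> (a :: real)"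
proof -
  have "(\<lambda>n. a + (1 / c) / real n) \<longlonglongrightarrow> a + 0"
    by (intro tendsto_add tendsto_const lim_const_over_n)
  then show ?thesis by simp
qed

lemma q_t_G_tendsto:
  assumes "2 \<le> k"
  shows "(\<lambda>n. q_t (G k) (G n)) \<longlonglongrightarrow> 1/2"
proof (rule tendsto_sandwich)
  show "(\<lambda>n. 1/2 + 1/(4 * real n)) \<longlonglongrightarrow> 1/2" "(\<lambda>n. 1/2 + 1/(2 * real n)) \<longlonglongrightarrow> 1/2"
    by (rule tendsto_plus_inverse_multiple_of_n)+
  show "\<forall>\<^sub>F n in sequentially. 1/2 + 1/(4 * real n) \<le> q_t (G k) (G n)"
    using eventually_ge_at_top[of k] by (rule eventually_mono) (rule q_t_G_bounds(1)[OF assms])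
  show "\<forall>\<^sub>F n in sequentially. q_t (G k) (G n) \<le> 1/2 + 1/(2 * real n)"
    using eventually_ge_at_top[of k] by (rule eventually_mono) (rule q_t_G_bounds(2)[OF assms])
qed

theorem corollary6:
  shows "(\<forall>k n::nat. 2 \<le> k \<and> k \<le> n \<longrightarrow>
            1/2 + 1/(4 * real n) \<le> q_t (G k) (G n) \<and>
            q_t (G k) (G n) \<le> 1/2 + 1/(2 * real n))
       \<and> (\<forall>k::nat. 2 \<le> k \<longrightarrow> (\<lambda>n. q_t (G k) (G n)) \<longlonglongrightarrow> 1/2)"
  using q_t_G_bounds q_t_G_tendsto by blast

end
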